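(* Let $V$ be a finite-dimensional vector space over $\mathbb{F}_q$ and $s_1,s_2,s_3$ transvections in $\mathrm{SL}(V)$. Then \[w(s_1,s_2,s_3)-w(s_1,s_3,s_2)=w(s_1,s_3)-w(s_1,s_2)w(s_2,s_3)-w(s_1^{s_2},s_3).\]
   Context: Transvections $s_i=1+u_i\otimes\phi_i$, i.e. $x\mapsto x+\phi_i(x)u_i$ with $\phi_i(u_i)=0$. For transvections $r_1,\dots,r_k$ ($k\ge2$), $w(r_1,\dots,r_k)=\prod_{i=1}^k\phi_{r_{i+1}}(u_{r_i})$ (indices mod $k$), which is independent of the chosen representations. $s^g=g^{-1}sg$. *)

theory Defs
  imports "HOL-Analysis.Analysis"
begin

text \<open>V = 'a^'n with 'a a finite field (some F_q) and 'n a finite index type.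
  Linear functionals on V are represented by coefficient vectors.\<close>

definition fapp :: "'a::comm_ring_1^'n \<Rightarrow> 'a^'n \<Rightarrow> 'a" where
  "fapp f x = (\<Sum>i\<in>UNIV. f $ i * x $ i)"

definition tv_rep :: "'a::comm_ring_1^'n^'n \<Rightarrow> 'a^'n \<Rightarrow> 'a^'n \<Rightarrow> bool" where
  "tv_rep s u f \<longleftrightarrow> fapp f u = 0 \<and> s = mat 1 + (\<chi> i j. u $ i * f $ j)"

definition transvection :: "'a::comm_ring_1^'n^'n \<Rightarrow> bool" where
  "transvection s \<longleftrightarrow> s \<noteq> mat 1 \<and> (\<exists>u f. tv_rep s u f)"

definition tv_u :: "'a::comm_ring_1^'n^'n \<Rightarrow> 'a^'n" where
  "tv_u s = fst (SOME p. tv_rep s (fst p) (snd p))"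

definition tv_f :: "'a::comm_ring_1^'n^'n \<Rightarrow> 'a^'n" where
  "tv_f s = snd (SOME p. tv_rep s (fst p) (snd p))"

definition w :: "('a::comm_ring_1^'n^'n) list \<Rightarrow> 'a" where
  "w rs = (\<Prod>i<length rs. fapp (tv_f (rs ! ((i + 1) mod length rs))) (tv_u (rs ! i)))"

definition conj_by :: "'a::field^'n^'n \<Rightarrow> 'a^'n^'n \<Rightarrow> 'a^'n^'n" where
  "conj_by s g = matrix_inv g ** s ** g"

end

theory Submission
  imports Defs
begin

text \<open>Conjugating \<open>s\<^sub>1 = 1 + u\<^sub>1 \<otimes> \<phi>\<^sub>1\<close> by \<open>s\<^sub>2 = 1 + u\<^sub>2 \<otimes> \<phi>\<^sub>2\<close> gives the transvection
  \<open>1 + (u\<^sub>1 - \<phi>\<^sub>2(u\<^sub>1) u\<^sub>2) \<otimes> (\<phi>\<^sub>1 + \<phi>\<^sub>1(u\<^sub>2) \<phi>\<^sub>2)\<close>, so that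
  \<open>w(s\<^sub>1\<^sup>s\<^sup>2, s\<^sub>3) = (\<phi>\<^sub>3(u\<^sub>1) - \<phi>\<^sub>2(u\<^sub>1) \<phi>\<^sub>3(u\<^sub>2)) (\<phi>\<^sub>1(u\<^sub>3) + \<phi>\<^sub>1(u\<^sub>2) \<phi>\<^sub>2(u\<^sub>3))\<close>;
  expanding this product gives the identity. Since \<open>w\<close> is computed from representations chosen
  by \<open>SOME\<close>, one needs that \<open>w(r, s)\<close> only depends on the rank-one parts \<open>u \<otimes> \<phi>\<close>.\<close>

definition outer_prod :: "'a::comm_ring_1^'n \<Rightarrow> 'a^'n \<Rightarrow> 'a^'n^'n" where
  "outer_prod u f = (\<chi> i j. u $ i * f $ j)"

lemma fapp_diff_right: "fapp f (x - y) = fapp f x - fapp f y"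
  by (simp add: fapp_def right_diff_distrib sum_subtractf)

lemma fapp_scale_right: "fapp f (c *s x) = c * fapp f x"
  by (simp add: fapp_def sum_distrib_left algebra_simps)

lemma fapp_add_left: "fapp (f + g) x = fapp f x + fapp g x"
  by (simp add: fapp_def distrib_right sum.distrib)

lemma fapp_scale_left: "fapp (c *s f) x = c * fapp f x"
  by (simp add: fapp_def sum_distrib_left algebra_simps)

lemma matrix_add_rdistrib: "((A::'a::semiring_1^'n^'m) + B) ** C = A ** C + B ** C"
  by (simp add: matrix_matrix_mult_def vec_eq_iff distrib_right sum.distrib)

lemma matrix_diff_rdistrib: "((A::'a::ring_1^'n^'m) - B) ** C = A ** C - B ** C"
  by (simp add: matrix_matrix_mult_def vec_eq_iff left_diff_distrib sum_subtractf)

lemma matrix_diff_ldistrib: "(A::'a::ring_1^'n^'m) ** (B - C) = A ** B - A ** C"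
  by (simp add: matrix_matrix_mult_def vec_eq_iff right_diff_distrib sum_subtractf)

lemma matrix_inv_eq:
  fixes A :: "'a::semiring_1^'n^'n"
  assumes "A ** B = mat 1" "B ** A = mat 1"
  shows "matrix_inv A = B"
proof -
  have "A ** matrix_inv A = mat 1 \<and> matrix_inv A ** A = mat 1"
    unfolding matrix_inv_def by (rule someI[of _ B]) (use assms in blast)
  then have left_inv: "matrix_inv A ** A = mat 1"
    by blast
  have "matrix_inv A = matrix_inv A ** (A ** B)"
    by (simp add: assms)
  also have "\<dots> = B"
    by (simp add: matrix_mul_assoc left_inv)
  finally show ?thesis .
qed

lemma outer_prod_mult: "outer_prod a b ** outer_prod c d = outer_prod a (fapp b c *s d)"
  unfolding outer_prod_def matrix_matrix_mult_def fapp_def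
  by (simp add: vec_eq_iff sum_distrib_left sum_distrib_right mult_ac)

lemma outer_prod_square: "fapp f u = 0 \<Longrightarrow> outer_prod u f ** outer_prod u f = 0"
  unfolding outer_prod_mult by (simp add: outer_prod_def vec_eq_iff)

lemma fapp_mult_fapp_eq_outer_prod:
  "fapp g u * fapp f v = (\<Sum>i\<in>UNIV. \<Sum>j\<in>UNIV. g $ i * outer_prod u f $ i $ j * v $ j)"
  unfolding fapp_def outer_prod_def sum_product by (simp add: mult_ac)

lemma tv_rep_iff: "tv_rep s u f \<longleftrightarrow> fapp f u = 0 \<and> s = mat 1 + outer_prod u f"
  unfolding tv_rep_def outer_prod_def ..

lemma tv_rep_outer_prod_eq:
  assumes "tv_rep s u f" "tv_rep s u' f'"
  shows "outer_prod u f = outer_prod u' f'"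
  using assms unfolding tv_rep_iff by (metis add_left_cancel)

lemma tv_rep_some:
  assumes "tv_rep s u f"
  shows "tv_rep s (tv_u s) (tv_f s)"
  unfolding tv_u_def tv_f_def
  by (rule someI[of "\<lambda>p. tv_rep s (fst p) (snd p)" "(u, f)"]) (simp add: assms)

lemma transvection_tv_rep: "transvection s \<Longrightarrow> tv_rep s (tv_u s) (tv_f s)"
  unfolding transvection_def using tv_rep_some by blast

lemma w_pair: "w [r, s] = fapp (tv_f s) (tv_u r) * fapp (tv_f r) (tv_u s)"
proof -
  have "{..<2::nat} = {0, 1}" by auto
  then show ?thesis unfolding w_def by simp
qed

lemma w_triple:
  "w [r, s, t] = fapp (tv_f s) (tv_u r) * fapp (tv_f t) (tv_u s) * fapp (tv_f r) (tv_u t)"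
proof -
  have "{..<3::nat} = {0, 1, 2}" by auto
  then show ?thesis unfolding w_def by (simp add: mult.assoc)
qed

lemma w_pair_tv_rep:
  assumes r: "tv_rep r u f" and s: "tv_rep s v g"
  shows "w [r, s] = fapp g u * fapp f v"
proof -
  have "w [r, s] = fapp (tv_f s) u * fapp f (tv_u s)"
    unfolding w_pair fapp_mult_fapp_eq_outer_prod
    using tv_rep_outer_prod_eq[OF tv_rep_some[OF r] r] by simp
  also have "\<dots> = fapp f (tv_u s) * fapp (tv_f s) u"
    by (rule mult.commute)
  also have "\<dots> = fapp f v * fapp g u"
    unfolding fapp_mult_fapp_eq_outer_prod
    using tv_rep_outer_prod_eq[OF tv_rep_some[OF s] s] by simp
  finally show ?thesis
    by (simp add: mult.commute)
qed

lemma matrix_inv_tv_rep: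
  assumes "tv_rep s u f"
  shows "matrix_inv s = mat 1 - outer_prod u f"
proof -
  have s: "s = mat 1 + outer_prod u f" and "fapp f u = 0"
    using assms by (simp_all add: tv_rep_iff)
  then have nil: "outer_prod u f ** outer_prod u f = 0"
    by (simp add: outer_prod_square)
  show ?thesis
    by (rule matrix_inv_eq) (simp_all add: s nil matrix_add_ldistrib matrix_add_rdistrib
        matrix_diff_ldistrib matrix_diff_rdistrib)
qed

lemma conj_by_tv_rep:
  fixes r s :: "'a::field^'n^'n"
  assumes r: "tv_rep r u f" and s: "tv_rep s v g"
  shows "tv_rep (conj_by r s) (u - fapp g u *s v) (f + fapp f v *s g)"
proof -
  let ?X = "outer_prod v g" and ?Y = "outer_prod u f"
  have fu: "fapp f u = 0" and gv: "fapp g v = 0"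
    using r s by (simp_all add: tv_rep_iff)
  have "conj_by r s = (mat 1 - ?X) ** (mat 1 + ?Y) ** (mat 1 + ?X)"
    unfolding conj_by_def matrix_inv_tv_rep[OF s] using r s by (simp add: tv_rep_iff)
  also have "\<dots> = mat 1 + ?Y + ?Y ** ?X - ?X ** ?Y - ?X ** ?Y ** ?X"
    by (simp add: matrix_add_ldistrib matrix_add_rdistrib matrix_diff_ldistrib
        matrix_diff_rdistrib outer_prod_square[OF gv])
  also have "\<dots> = mat 1 + outer_prod (u - fapp g u *s v) (f + fapp f v *s g)"
    by (simp add: outer_prod_mult fapp_scale_left gv)
      (simp add: outer_prod_def vec_eq_iff algebra_simps)
  finally show ?thesis
    by (simp add: tv_rep_iff fapp_diff_right fapp_scale_right fapp_add_left fapp_scale_left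
        fu gv algebra_simps)
qed

theorem lemma4p11:
  fixes s1 s2 s3 :: "'a::{field,finite}^'n::finite^'n"
  assumes "transvection s1" "transvection s2" "transvection s3"
    and "det s1 = 1" "det s2 = 1" "det s3 = 1"
  shows "w [s1, s2, s3] - w [s1, s3, s2]
         = w [s1, s3] - w [s1, s2] * w [s2, s3] - w [conj_by s1 s2, s3]"
proof -
  define u1 f1 u2 f2 u3 f3
    where "u1 = tv_u s1" "f1 = tv_f s1" "u2 = tv_u s2" "f2 = tv_f s2" "u3 = tv_u s3" "f3 = tv_f s3"
  note reps = u1_f1_u2_f2_u3_f3_def
  have r1: "tv_rep s1 u1 f1" and r2: "tv_rep s2 u2 f2" and r3: "tv_rep s3 u3 f3"
    using assms(1-3) by (simp_all add: reps transvection_tv_rep)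
  have "w [conj_by s1 s2, s3] = fapp f3 (u1 - fapp f2 u1 *s u2) * fapp (f1 + fapp f1 u2 *s f2) u3"
    by (rule w_pair_tv_rep[OF conj_by_tv_rep[OF r1 r2] r3])
  then show ?thesis
    unfolding w_pair w_triple reps[symmetric]
    by (simp add: fapp_diff_right fapp_scale_right fapp_add_left fapp_scale_left algebra_simps)
qed

end
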